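(* Let $(X_n)_{n\ge0}$ be a Galton–Watson process with $X_0=1$ and $X_n=\sum_{k=1}^{X_{n-1}}Y_{n,k}$, where $(Y_{n,k})$ are i.i.d. nonnegative integer-valued random variables with finite mean $m>1$ and finite variance, and assume the process a.s. never becomes extinct (i.e. $\mathbb{P}(X_n=0\text{ for some }n)=0$). Let $L(t)=\log\mathbb{E}[\exp(t(Y_{n,k}-m))]$ and assume $L$ is finite on $[-c,c]$ for some $c>0$; let $I(x)=\sup_{-c\le t\le c}\{xt-L(t)\}$ and $J(x)=\min(I(x),I(-x))$. Define $\tilde m_n=X_n/X_{n-1}$, $\hat m_n=\frac{\sum_{k=1}^nX_k}{\sum_{k=1}^nX_{k-1}}$, and $S_n=\sum_{k=0}^nX_k$. Then for all $n\ge1$ and $x>0$, $$\mathbb{P}(|\tilde m_n-m|\ge x)\le2\,\mathbb{E}[\exp(-J(x)X_{n-1})],$$ $$\mathbb{P}(|\tilde m_n-m|\ge x)\le2\inf_{p>1}\big(\mathbb{E}[\exp(-(p-1)J(x)X_{n-1})]\big)^{1/p},$$ $$\mathbb{P}(|\hat m_n-m|\ge x)\le2\inf_{p>1}\big(\mathbb{E}[\exp(-(p-1)J(x)S_{n-1})]\big)^{1/p}.$$ *)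

theory Defs
  imports "HOL-Probability.Probability"
begin

fun gw_X :: "(nat \<Rightarrow> nat \<Rightarrow> 'a \<Rightarrow> nat) \<Rightarrow> nat \<Rightarrow> 'a \<Rightarrow> nat" where
  "gw_X Y 0 \<omega> = 1"
| "gw_X Y (Suc n) \<omega> = (\<Sum>k = 1..gw_X Y n \<omega>. Y (Suc n) k \<omega>)"

text \<open>Centered log-moment generating function of the offspring law (Y 1 1 has the common law).\<close>
definition gw_L :: "'a measure \<Rightarrow> (nat \<Rightarrow> nat \<Rightarrow> 'a \<Rightarrow> nat) \<Rightarrow> real \<Rightarrow> real \<Rightarrow> real" where
  "gw_L M Y m t = ln (integral\<^sup>L M (\<lambda>\<omega>. exp (t * (real (Y 1 1 \<omega>) - m))))"

definition gw_I :: "'a measure \<Rightarrow> (nat \<Rightarrow> nat \<Rightarrow> 'a \<Rightarrow> nat) \<Rightarrow> real \<Rightarrow> real \<Rightarrow> real \<Rightarrow> real" where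
  "gw_I M Y m c x = (SUP t\<in>{-c..c}. x * t - gw_L M Y m t)"

definition gw_J :: "'a measure \<Rightarrow> (nat \<Rightarrow> nat \<Rightarrow> 'a \<Rightarrow> nat) \<Rightarrow> real \<Rightarrow> real \<Rightarrow> real \<Rightarrow> real" where
  "gw_J M Y m c x = min (gw_I M Y m c x) (gw_I M Y m c (- x))"

end

theory Submission
  imports Defs
begin

(*
  Write D = N - m R for an estimator N / R of m.  Everything rests on one identity:
  since generation n is a sum of X (n-1) fresh offspring variables independent of the
  past, for every nonnegative measurable functional F of the past and t in [-c, c]
      E[F exp (t (X n - m X (n-1)))] = E[F exp (L t X (n-1))].
  Two consequences are used: the Cramer-type identity
  E[exp (t (X n - m X (n-1)) - l X (n-1))] = E[exp ((L t - l) X (n-1))], and the fact that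
  exp (t sum (X k - m X (k-1)) - L t sum X (k-1)) is a martingale of mean one.

  Independently of the process, two abstract tail bounds for the event a (D - a R) >= 0
  are proved: a Markov bound E[exp (-(a t - L t) R)] from the Cramer identity, and a
  bound (E[exp (-(p-1)(a t - L t) R)])^(1/p) from the mean-one property, via the
  pointwise Young inequality.  Letting a t - L t approach its supremum I a over [-c, c]
  (dominated convergence) and splitting |N / R - m| >= x into the two one-sided events
  with a = x and a = -x, where J x = min (I x) (I (-x)), gives the three estimates of
  the corollary.
*)

lemma sign_transfer:
  fixes t a D R :: real
  assumes "a \<noteq> 0" "t * a \<ge> 0" "0 \<le> a * (D - a * R)"
  shows "t * (D - a * R) \<ge> 0"
proof -
  have "t * (D - a * R) = (t * a) * (a * (D - a * R)) / a ^ 2"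
    using assms(1) by (simp add: power2_eq_square field_simps)
  also have "\<dots> \<ge> 0" using assms by simp
  finally show ?thesis .
qed

text \<open>Pointwise Young inequality in exponential form; it replaces Hoelder's inequality.\<close>
lemma young_exp:
  fixes q u :: real assumes q: "q > 1"
  shows "1 \<le> (q - 1) / q * exp u + exp (- (q - 1) * u) / q"
proof -
  have "(q - 1) * (1 + u) \<le> (q - 1) * exp u" using q exp_ge_add_one_self[of u] by simp
  moreover have "1 + (- (q - 1) * u) \<le> exp (- (q - 1) * u)" by (rule exp_ge_add_one_self)
  ultimately have "q \<le> (q - 1) * exp u + exp (- (q - 1) * u)" by (simp add: algebra_simps)
  thus ?thesis using q by (simp add: field_simps)
qed

lemma ratio_deviation_cases:
  fixes N R m x :: real
  assumes R: "R > 0" and x: "x > 0" and h: "x \<le> \<bar>N / R - m\<bar>"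
  shows "0 \<le> x * ((N - m * R) - x * R) \<or> 0 \<le> - x * ((N - m * R) - - x * R)"
proof -
  have "N / R - m = (N - m * R) / R" using R by (simp add: field_simps)
  hence "x * R \<le> \<bar>N - m * R\<bar>" using h R by (simp add: pos_le_divide_eq)
  hence "(N - m * R) - x * R \<ge> 0 \<or> (N - m * R) + x * R \<le> 0" by linarith
  thus ?thesis using x by (auto intro: mult_nonneg_nonneg mult_nonneg_nonpos)
qed

lemma le_at_Sup_by_approximation:
  fixes f G :: "real \<Rightarrow> real" and S :: "real set" and P :: real
  assumes z: "z \<in> S" "f z = 0" and bdd: "bdd_above (f ` S)"
    and bound: "\<And>t. t \<in> S \<Longrightarrow> f t \<ge> 0 \<Longrightarrow> P \<le> G (f t)"
    and cont: "\<And>w. (\<And>k. w k \<ge> 0) \<Longrightarrow> w \<longlonglongrightarrow> (SUP t\<in>S. f t) \<Longrightarrow> (\<lambda>k. G (w k)) \<longlonglongrightarrow> G (SUP t\<in>S. f t)"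
  shows "P \<le> G (SUP t\<in>S. f t)"
proof -
  define I where "I = (SUP t\<in>S. f t)"
  have ne: "S \<noteq> {}" using z by auto
  have up: "f t \<le> I" if "t \<in> S" for t unfolding I_def by (rule cSUP_upper[OF that bdd])
  have I0: "0 \<le> I" using up[OF z(1)] z(2) by simp
  have "\<forall>k. \<exists>t. t \<in> S \<and> I - inverse (real (Suc k)) < f t"
  proof
    fix k
    have "I - inverse (real (Suc k)) < I" by simp
    then show "\<exists>t. t \<in> S \<and> I - inverse (real (Suc k)) < f t"
      unfolding I_def using less_cSUP_iff[OF ne bdd] by (simp add: I_def) blast
  qed
  then obtain T where T: "\<And>k. T k \<in> S" "\<And>k. I - inverse (real (Suc k)) < f (T k)" by metis
  define w where "w k = max (f (T k)) 0" for k
  have w0: "w k \<ge> 0" for k by (simp add: w_def)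
  have Pw: "P \<le> G (w k)" for k
    using bound[OF T(1)] bound[OF z(1)] z(2) by (cases "f (T k) \<ge> 0") (auto simp: w_def)
  have lim: "w \<longlonglongrightarrow> I"
  proof (rule tendsto_sandwich[where f="\<lambda>k. I - inverse (real (Suc k))" and h="\<lambda>k. I"])
    show "\<forall>\<^sub>F k in sequentially. I - inverse (real (Suc k)) \<le> w k"
      using T(2) by (intro always_eventually allI) (smt (verit) w_def)
    show "\<forall>\<^sub>F k in sequentially. w k \<le> I"
      using up[OF T(1)] I0 by (intro always_eventually allI) (simp add: w_def)
    show "(\<lambda>k. I - inverse (real (Suc k))) \<longlonglongrightarrow> I"
      using tendsto_diff[OF tendsto_const[of I] LIMSEQ_inverse_real_of_nat] by simp
  qed simp
  have "(\<lambda>k. G (w k)) \<longlonglongrightarrow> G I" using cont[OF w0] lim by (simp add: I_def)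
  then show ?thesis unfolding I_def[symmetric] by (rule LIMSEQ_le_const) (use Pw in auto)
qed


context prob_space
begin

lemma integrable_exp_neg:
  fixes R :: "'a \<Rightarrow> real"
  assumes [measurable]: "R \<in> borel_measurable M" and R0: "\<And>\<omega>. R \<omega> \<ge> 0" and w: "w \<ge> 0"
  shows "integrable M (\<lambda>\<omega>. exp (- w * R \<omega>))"
  using R0 w by (intro integrable_const_bound[where B=1] AE_I2) (auto simp: mult_nonneg_nonneg)

lemma integral_exp_neg_pos:
  fixes R :: "'a \<Rightarrow> real"
  assumes [measurable]: "R \<in> borel_measurable M" and R0: "\<And>\<omega>. R \<omega> \<ge> 0" and w: "w \<ge> 0"
  shows "integral\<^sup>L M (\<lambda>\<omega>. exp (- w * R \<omega>)) > 0"
proof -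
  note i = integrable_exp_neg[OF _ R0 w]
  have "integral\<^sup>L M (\<lambda>\<omega>. exp (- w * R \<omega>)) \<noteq> 0"
    using integral_nonneg_eq_0_iff_AE[OF i] by (simp add: AE_False)
  moreover have "integral\<^sup>L M (\<lambda>\<omega>. exp (- w * R \<omega>)) \<ge> 0" by (rule integral_nonneg_AE) simp
  ultimately show ?thesis by linarith
qed

lemma nn_integral_exp_neg:
  fixes R :: "'a \<Rightarrow> real"
  assumes [measurable]: "R \<in> borel_measurable M" and R0: "\<And>\<omega>. R \<omega> \<ge> 0" and w: "w \<ge> 0"
  shows "(\<integral>\<^sup>+\<omega>. ennreal (exp (- w * R \<omega>)) \<partial>M) = ennreal (integral\<^sup>L M (\<lambda>\<omega>. exp (- w * R \<omega>)))"
  by (rule nn_integral_eq_integral[OF integrable_exp_neg[OF _ R0 w]]) auto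

lemma integral_exp_neg_antimono:
  fixes R :: "'a \<Rightarrow> real"
  assumes [measurable]: "R \<in> borel_measurable M" and R0: "\<And>\<omega>. R \<omega> \<ge> 0"
    and w: "0 \<le> w1" "w1 \<le> w2"
  shows "integral\<^sup>L M (\<lambda>\<omega>. exp (- w2 * R \<omega>)) \<le> integral\<^sup>L M (\<lambda>\<omega>. exp (- w1 * R \<omega>))"
proof (rule integral_mono)
  show "integrable M (\<lambda>\<omega>. exp (- w2 * R \<omega>))" "integrable M (\<lambda>\<omega>. exp (- w1 * R \<omega>))"
    using integrable_exp_neg[OF _ R0] w by auto
  show "exp (- w2 * R \<omega>) \<le> exp (- w1 * R \<omega>)" for \<omega>
    using mult_right_mono[OF w(2) R0[of \<omega>]] by simp
qed

lemma integral_exp_neg_tendsto: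
  fixes R :: "'a \<Rightarrow> real"
  assumes [measurable]: "R \<in> borel_measurable M" and R0: "\<And>\<omega>. R \<omega> \<ge> 0"
    and w0: "\<And>k. w k \<ge> 0" and lim: "w \<longlonglongrightarrow> I"
  shows "(\<lambda>k. integral\<^sup>L M (\<lambda>\<omega>. exp (- w k * R \<omega>))) \<longlonglongrightarrow> integral\<^sup>L M (\<lambda>\<omega>. exp (- I * R \<omega>))"
proof (rule integral_dominated_convergence[where w="\<lambda>_. 1"])
  show "AE x in M. (\<lambda>i. exp (- w i * R x)) \<longlonglongrightarrow> exp (- I * R x)"
    by (intro AE_I2 tendsto_intros lim)
  show "AE x in M. norm (exp (- w i * R x)) \<le> 1" for i
    using w0[of i] R0 by (intro AE_I2) (simp add: mult_nonneg_nonneg)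
qed auto

end


section \<open>Two abstract one-sided tail bounds\<close>

text \<open>The one-sided deviation event of D against the threshold a R: for a > 0 it says
  D \<ge> a R, for a < 0 it says D \<le> a R.\<close>
definition overshoot_event :: "'a measure \<Rightarrow> ('a \<Rightarrow> real) \<Rightarrow> ('a \<Rightarrow> real) \<Rightarrow> real \<Rightarrow> 'a set" where
  "overshoot_event M D R a = {\<omega> \<in> space M. 0 \<le> a * (D \<omega> - a * R \<omega>)}"

lemma overshoot_event_sets[measurable]:
  assumes [measurable]: "D \<in> borel_measurable M" "R \<in> borel_measurable M"
  shows "overshoot_event M D R a \<in> sets M"
  unfolding overshoot_event_def by measurable

context prob_space
begin

lemma overshoot_markov:
  fixes D R :: "'a \<Rightarrow> real"
  assumes [measurable]: "D \<in> borel_measurable M" "R \<in> borel_measurable M"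
    and R0: "\<And>\<omega>. R \<omega> \<ge> 0" and a: "a \<noteq> 0" and ta: "t * a \<ge> 0" and v: "v \<ge> 0"
    and H: "(\<integral>\<^sup>+\<omega>. ennreal (exp (t * D \<omega> - t * a * R \<omega>)) \<partial>M) = (\<integral>\<^sup>+\<omega>. ennreal (exp (- v * R \<omega>)) \<partial>M)"
  shows "measure M (overshoot_event M D R a) \<le> integral\<^sup>L M (\<lambda>\<omega>. exp (- v * R \<omega>))"
proof -
  let ?A = "overshoot_event M D R a"
  have "emeasure M ?A = (\<integral>\<^sup>+\<omega>. indicator ?A \<omega> \<partial>M)" by simp
  also have "\<dots> \<le> (\<integral>\<^sup>+\<omega>. ennreal (exp (t * D \<omega> - t * a * R \<omega>)) \<partial>M)"
  proof (rule nn_integral_mono)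
    fix \<omega> assume "\<omega> \<in> space M"
    show "indicator ?A \<omega> \<le> ennreal (exp (t * D \<omega> - t * a * R \<omega>))"
    proof (cases "\<omega> \<in> ?A")
      case True
      hence "t * (D \<omega> - a * R \<omega>) \<ge> 0"
        using sign_transfer[OF a ta] by (auto simp: overshoot_event_def)
      hence "1 \<le> exp (t * D \<omega> - t * a * R \<omega>)" by (simp add: algebra_simps)
      then show ?thesis using True by simp
    qed simp
  qed
  also have "\<dots> = ennreal (integral\<^sup>L M (\<lambda>\<omega>. exp (- v * R \<omega>)))"
    using H nn_integral_exp_neg[OF _ R0 v] by simp
  finally show ?thesis by (simp add: emeasure_eq_measure ennreal_le_iff)
qed

text \<open>On the event, 1 is bounded by a convex combination of
  exp (t D - l R) and exp (-(q-1) v R) whose weights are optimised for the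
  right-hand side.\<close>
lemma overshoot_young:
  fixes D R :: "'a \<Rightarrow> real"
  assumes [measurable]: "D \<in> borel_measurable M" "R \<in> borel_measurable M"
    and R0: "\<And>\<omega>. R \<omega> \<ge> 0" and a: "a \<noteq> 0" and ta: "t * a \<ge> 0" and v: "v \<ge> 0"
    and q: "q > 1" and hv: "v = a * t - l"
    and H: "(\<integral>\<^sup>+\<omega>. ennreal (exp (t * D \<omega> - l * R \<omega>)) \<partial>M) \<le> 1"
  shows "measure M (overshoot_event M D R a)
     \<le> (integral\<^sup>L M (\<lambda>\<omega>. exp (- ((q - 1) * v) * R \<omega>))) powr (1 / q)"
proof -
  let ?A = "overshoot_event M D R a"
  define U where "U = integral\<^sup>L M (\<lambda>\<omega>. exp (- ((q - 1) * v) * R \<omega>))"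
  have w: "(q - 1) * v \<ge> 0" using q v by simp
  have U0: "U > 0" unfolding U_def by (rule integral_exp_neg_pos[OF _ R0 w]) simp
  define \<sigma> where "\<sigma> = - ln U / q"
  define \<alpha> where "\<alpha> = (q - 1) / q * exp (- \<sigma>)"
  define \<beta> where "\<beta> = exp ((q - 1) * \<sigma>) / q"
  have \<alpha>0: "\<alpha> \<ge> 0" and \<beta>0: "\<beta> \<ge> 0" using q by (auto simp: \<alpha>_def \<beta>_def)
  have pointwise: "indicator ?A \<omega> \<le> ennreal \<alpha> * ennreal (exp (t * D \<omega> - l * R \<omega>))
      + ennreal \<beta> * ennreal (exp (- ((q - 1) * v) * R \<omega>))" for \<omega>
  proof (cases "\<omega> \<in> ?A")
    case True
    hence "t * (D \<omega> - a * R \<omega>) \<ge> 0"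
      using sign_transfer[OF a ta] by (auto simp: overshoot_event_def)
    hence ge: "v * R \<omega> \<le> t * D \<omega> - l * R \<omega>" by (simp add: hv algebra_simps)
    define u where "u = v * R \<omega> - \<sigma>"
    have "1 \<le> (q - 1) / q * exp u + exp (- (q - 1) * u) / q" by (rule young_exp[OF q])
    also have "(q - 1) / q * exp u = \<alpha> * exp (v * R \<omega>)"
      by (simp add: \<alpha>_def u_def exp_diff field_simps exp_minus)
    also have "exp (- (q - 1) * u) / q = \<beta> * exp (- ((q - 1) * v) * R \<omega>)"
      by (simp add: \<beta>_def u_def exp_add[symmetric] algebra_simps)
    also have "\<alpha> * exp (v * R \<omega>) \<le> \<alpha> * exp (t * D \<omega> - l * R \<omega>)"
      using ge \<alpha>0 by (intro mult_left_mono) auto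
    finally have "ennreal 1 \<le> ennreal (\<alpha> * exp (t * D \<omega> - l * R \<omega>) + \<beta> * exp (- ((q - 1) * v) * R \<omega>))"
      by (intro ennreal_leI) simp
    then show ?thesis using True \<alpha>0 \<beta>0
      by (simp add: ennreal_plus[symmetric] ennreal_mult[symmetric] del: ennreal_plus)
  qed simp
  have "emeasure M ?A = (\<integral>\<^sup>+\<omega>. indicator ?A \<omega> \<partial>M)" by simp
  also have "\<dots> \<le> (\<integral>\<^sup>+\<omega>. ennreal \<alpha> * ennreal (exp (t * D \<omega> - l * R \<omega>))
        + ennreal \<beta> * ennreal (exp (- ((q - 1) * v) * R \<omega>)) \<partial>M)"
    by (intro nn_integral_mono pointwise)
  also have "\<dots> = ennreal \<alpha> * (\<integral>\<^sup>+\<omega>. ennreal (exp (t * D \<omega> - l * R \<omega>)) \<partial>M)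
      + ennreal \<beta> * (\<integral>\<^sup>+\<omega>. ennreal (exp (- ((q - 1) * v) * R \<omega>)) \<partial>M)"
    by (subst nn_integral_add) (auto simp: nn_integral_cmult)
  also have "\<dots> \<le> ennreal \<alpha> * 1 + ennreal \<beta> * ennreal U"
    using H nn_integral_exp_neg[OF _ R0 w] unfolding U_def by (intro add_mono mult_left_mono) auto
  also have "\<dots> = ennreal (\<alpha> + \<beta> * U)"
    using \<alpha>0 \<beta>0 U0 by (simp add: ennreal_plus[symmetric] ennreal_mult[symmetric] del: ennreal_plus)
  finally have "measure M ?A \<le> \<alpha> + \<beta> * U"
    using \<alpha>0 \<beta>0 U0 by (simp add: emeasure_eq_measure ennreal_le_iff del: ennreal_plus)
  also have "\<alpha> + \<beta> * U = U powr (1 / q)"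
  proof -
    have "exp (- \<sigma>) = U powr (1 / q)" using U0 by (simp add: \<sigma>_def powr_def)
    moreover have "exp ((q - 1) * \<sigma>) * U = U powr (1 / q)"
    proof -
      have e: "(q - 1) * \<sigma> + ln U = ln U / q" using q by (simp add: \<sigma>_def field_simps)
      have "exp ((q - 1) * \<sigma>) * U = exp ((q - 1) * \<sigma> + ln U)" using U0 by (simp add: exp_add)
      also have "\<dots> = U powr (1 / q)" using U0 by (simp add: e powr_def)
      finally show ?thesis .
    qed
    ultimately show ?thesis using q by (simp add: \<alpha>_def \<beta>_def field_simps)
  qed
  finally show ?thesis unfolding U_def .
qed

lemma ratio_deviation_le:
  fixes N R :: "'a \<Rightarrow> real"
  assumes [measurable]: "N \<in> borel_measurable M" "R \<in> borel_measurable M"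
    and Rpos: "AE \<omega> in M. R \<omega> > 0" and x: "x > 0"
  shows "measure M {\<omega> \<in> space M. \<bar>N \<omega> / R \<omega> - m\<bar> \<ge> x}
    \<le> measure M (overshoot_event M (\<lambda>\<omega>. N \<omega> - m * R \<omega>) R x)
     + measure M (overshoot_event M (\<lambda>\<omega>. N \<omega> - m * R \<omega>) R (- x))"
proof -
  let ?D = "\<lambda>\<omega>. N \<omega> - m * R \<omega>"
  have "AE \<omega> in M. \<omega> \<in> {\<omega> \<in> space M. \<bar>N \<omega> / R \<omega> - m\<bar> \<ge> x}
      \<longrightarrow> \<omega> \<in> overshoot_event M ?D R x \<union> overshoot_event M ?D R (- x)"
    using Rpos by eventually_elim (use ratio_deviation_cases[OF _ x] in \<open>auto simp: overshoot_event_def\<close>)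
  hence "measure M {\<omega> \<in> space M. \<bar>N \<omega> / R \<omega> - m\<bar> \<ge> x}
      \<le> measure M (overshoot_event M ?D R x \<union> overshoot_event M ?D R (- x))"
    by (intro finite_measure_mono_AE) auto
  also have "\<dots> \<le> measure M (overshoot_event M ?D R x) + measure M (overshoot_event M ?D R (- x))"
    by (intro measure_Un_le) auto
  finally show ?thesis .
qed

end


section \<open>The Galton--Watson process as a function of its offspring variables\<close>

lemma gw_X_cong:
  assumes "\<And>i k. 1 \<le> i \<Longrightarrow> i \<le> r \<Longrightarrow> 1 \<le> k \<Longrightarrow> Y i k \<omega> = Y' i k \<omega>'"
  shows "gw_X Y r \<omega> = gw_X Y' r \<omega>'"
  using assms
proof (induction r)
  case (Suc r)
  then have "gw_X Y r \<omega> = gw_X Y' r \<omega>'" by simp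
  moreover have "\<And>k. 1 \<le> k \<Longrightarrow> Y (Suc r) k \<omega> = Y' (Suc r) k \<omega>'" using Suc.prems by simp
  ultimately show ?case by (auto intro: sum.cong)
qed simp

lemma gw_X_measurable:
  assumes "\<And>i k. 1 \<le> i \<Longrightarrow> i \<le> r \<Longrightarrow> 1 \<le> k \<Longrightarrow> Y i k \<in> measurable N (count_space UNIV)"
  shows "gw_X Y r \<in> measurable N (count_space UNIV)"
  using assms
proof (induction r)
  case 0
  then show ?case by simp
next
  case (Suc r)
  have g: "gw_X Y r \<in> measurable N (count_space UNIV)" using Suc by simp
  have f: "(\<lambda>\<omega>. \<Sum>k = 1..j. Y (Suc r) k \<omega>) \<in> measurable N (count_space UNIV)" for j
  proof -
    have "\<And>k. k \<in> {1..j} \<Longrightarrow> (\<lambda>\<omega>. real (Y (Suc r) k \<omega>)) \<in> borel_measurable N"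
      using Suc.prems by (auto intro: measurable_compose[OF _ measurable_count_space])
    hence "(\<lambda>\<omega>. \<Sum>k = 1..j. real (Y (Suc r) k \<omega>)) \<in> borel_measurable N" by auto
    hence "(\<lambda>\<omega>. nat \<lfloor>\<Sum>k = 1..j. real (Y (Suc r) k \<omega>)\<rfloor>) \<in> measurable N (count_space UNIV)"
      by measurable
    thus ?thesis by (simp flip: of_nat_sum)
  qed
  have "(\<lambda>\<omega>. (\<lambda>j \<omega>. \<Sum>k = 1..j. Y (Suc r) k \<omega>) (gw_X Y r \<omega>) \<omega>) \<in> measurable N (count_space UNIV)"
    by (rule measurable_compose_countable'[OF f g]) auto
  thus ?case by simp
qed

text \<open>The history before generation n: the offspring variables of generations 1, ..., n-1,
  packed into one element of a product space.  On that space the coordinates play the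
  role of offspring variables.\<close>
definition past_indices :: "nat \<Rightarrow> (nat \<times> nat) set" where
  "past_indices n = {(i, k). 1 \<le> i \<and> i < n \<and> 1 \<le> k}"

definition history :: "(nat \<Rightarrow> nat \<Rightarrow> 'a \<Rightarrow> nat) \<Rightarrow> nat \<Rightarrow> 'a \<Rightarrow> (nat \<times> nat \<Rightarrow> nat)" where
  "history Y n \<omega> = restrict (\<lambda>p. case_prod Y p \<omega>) (past_indices n)"

definition coordinate_offspring :: "nat \<Rightarrow> nat \<Rightarrow> (nat \<times> nat \<Rightarrow> nat) \<Rightarrow> nat" where
  "coordinate_offspring i k w = w (i, k)"

abbreviation history_space :: "nat \<Rightarrow> (nat \<times> nat \<Rightarrow> nat) measure" where
  "history_space n \<equiv> PiM (past_indices n) (\<lambda>_. count_space UNIV)"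

lemma gw_X_history: "r < n \<Longrightarrow> gw_X Y r \<omega> = gw_X coordinate_offspring r (history Y n \<omega>)"
  by (rule gw_X_cong) (auto simp: coordinate_offspring_def history_def past_indices_def)

lemma gw_X_coordinate_measurable:
  "r < n \<Longrightarrow> gw_X coordinate_offspring r \<in> measurable (history_space n) (count_space UNIV)"
proof (rule gw_X_measurable)
  fix i k :: nat assume "r < n" "1 \<le> i" "i \<le> r" "1 \<le> k"
  hence "(i, k) \<in> past_indices n" by (auto simp: past_indices_def)
  hence "(\<lambda>w. w (i, k)) \<in> measurable (history_space n) (count_space UNIV)"
    by (rule measurable_component_singleton)
  thus "coordinate_offspring i k \<in> measurable (history_space n) (count_space UNIV)"
    by (simp add: coordinate_offspring_def[abs_def])
qed

lemma real_gw_X_coordinate_measurable: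
  "r < n \<Longrightarrow> (\<lambda>w. real (gw_X coordinate_offspring r w)) \<in> borel_measurable (history_space n)"
  by (rule measurable_compose[OF gw_X_coordinate_measurable]) auto


section \<open>The generation step\<close>

text \<open>The hypotheses of the corollary that the bounds actually use: i.i.d. offspring
  variables with mean m and a centred moment generating function finite on [-c, c].\<close>
locale galton_watson = prob_space M for M :: "'a measure" +
  fixes Y :: "nat \<Rightarrow> nat \<Rightarrow> 'a \<Rightarrow> nat" and m c :: real
  assumes indep: "indep_vars (\<lambda>_. count_space UNIV) (\<lambda>(i, k). Y i k) {(i, k). 1 \<le> i \<and> 1 \<le> k}"
    and ident: "\<And>i k. 1 \<le> i \<Longrightarrow> 1 \<le> k \<Longrightarrow>
                  distr M (count_space UNIV) (Y i k) = distr M (count_space UNIV) (Y 1 1)"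
    and mean_int: "integrable M (\<lambda>\<omega>. real (Y 1 1 \<omega>))"
    and m_def: "m = integral\<^sup>L M (\<lambda>\<omega>. real (Y 1 1 \<omega>))"
    and c_pos: "c > 0"
    and mgf_fin: "\<And>t. t \<in> {-c..c} \<Longrightarrow> integrable M (\<lambda>\<omega>. exp (t * (real (Y 1 1 \<omega>) - m)))"
begin

abbreviation "L \<equiv> gw_L M Y m"

lemma Y_measurable: "1 \<le> i \<Longrightarrow> 1 \<le> k \<Longrightarrow> Y i k \<in> measurable M (count_space UNIV)"
  using indep unfolding indep_vars_def by auto

lemma X_measurable[measurable]: "gw_X Y r \<in> measurable M (count_space UNIV)"
  by (rule gw_X_measurable) (auto intro: Y_measurable)

lemma history_measurable[measurable]: "history Y n \<in> measurable M (history_space n)"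
  unfolding history_def by (rule measurable_restrict) (auto simp: past_indices_def intro: Y_measurable)

text \<open>By Jensen (here just exp u \<ge> 1 + u) the centred moment generating function is \<ge> 1,
  so L t = ln E[exp (t (Y - m))] is its honest logarithm and is nonnegative.\<close>
lemma centred_mgf_ge_1:
  assumes "t \<in> {-c..c}"
  shows "integral\<^sup>L M (\<lambda>\<omega>. exp (t * (real (Y 1 1 \<omega>) - m))) \<ge> 1"
proof -
  have i: "integrable M (\<lambda>\<omega>. 1 + t * (real (Y 1 1 \<omega>) - m))"
    using mean_int by auto
  have "1 = integral\<^sup>L M (\<lambda>\<omega>. 1 + t * (real (Y 1 1 \<omega>) - m))"
    using mean_int by (simp add: m_def prob_space)
  also have "\<dots> \<le> integral\<^sup>L M (\<lambda>\<omega>. exp (t * (real (Y 1 1 \<omega>) - m)))"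
    by (rule integral_mono[OF i mgf_fin[OF assms]]) (rule exp_ge_add_one_self)
  finally show ?thesis .
qed

lemma exp_L: "t \<in> {-c..c} \<Longrightarrow> exp (L t) = integral\<^sup>L M (\<lambda>\<omega>. exp (t * (real (Y 1 1 \<omega>) - m)))"
  using centred_mgf_ge_1[of t] by (simp add: gw_L_def)

lemma L_nonneg: "t \<in> {-c..c} \<Longrightarrow> L t \<ge> 0"
  using centred_mgf_ge_1[of t] by (simp add: gw_L_def)

lemma L_zero: "L 0 = 0"
  by (simp add: gw_L_def prob_space)

lemma offspring_mgf:
  assumes "t \<in> {-c..c}" "1 \<le> i" "1 \<le> k"
  shows "(\<integral>\<^sup>+\<omega>. ennreal (exp (t * (real (Y i k \<omega>) - m))) \<partial>M) = ennreal (exp (L t))"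
proof -
  have "(\<integral>\<^sup>+\<omega>. ennreal (exp (t * (real (Y i k \<omega>) - m))) \<partial>M)
      = (\<integral>\<^sup>+z. ennreal (exp (t * (real z - m))) \<partial>distr M (count_space UNIV) (Y i k))"
    using Y_measurable[OF assms(2,3)] by (simp add: nn_integral_distr)
  also have "\<dots> = (\<integral>\<^sup>+z. ennreal (exp (t * (real z - m))) \<partial>distr M (count_space UNIV) (Y 1 1))"
    using ident[OF assms(2,3)] by simp
  also have "\<dots> = (\<integral>\<^sup>+\<omega>. ennreal (exp (t * (real (Y 1 1 \<omega>) - m))) \<partial>M)"
    using Y_measurable[of 1 1] by (simp add: nn_integral_distr)
  also have "\<dots> = ennreal (integral\<^sup>L M (\<lambda>\<omega>. exp (t * (real (Y 1 1 \<omega>) - m))))"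
    by (rule nn_integral_eq_integral[OF mgf_fin[OF assms(1)]]) auto
  finally show ?thesis using exp_L[OF assms(1)] by simp
qed

lemma history_offspring_independent:
  assumes n: "1 \<le> n" and t: "t \<in> {-c..c}"
    and G[measurable]: "G \<in> borel_measurable (history_space n)"
  shows "(\<integral>\<^sup>+\<omega>. G (history Y n \<omega>) * (\<Prod>b\<in>{1..j}. ennreal (exp (t * (real (Y n b \<omega>) - m)))) \<partial>M)
       = (\<integral>\<^sup>+\<omega>. G (history Y n \<omega>) \<partial>M) * ennreal (exp (L t)) ^ j"
proof -
  define K where "K b = (if b = 0 then past_indices n else {(n, b)})" for b
  define V where "V b \<omega> = restrict (\<lambda>p. case_prod Y p \<omega>) (K b)" for b \<omega>
  define \<Phi> where "\<Phi> b w = (if b = 0 then G w else ennreal (exp (t * (real (w (n, b)) - m))))"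
    for b and w :: "nat \<times> nat \<Rightarrow> nat"
  have V0: "\<Phi> 0 (V 0 \<omega>) = G (history Y n \<omega>)" for \<omega>
    by (simp add: \<Phi>_def V_def K_def history_def)
  have Vb: "b \<noteq> 0 \<Longrightarrow> \<Phi> b (V b \<omega>) = ennreal (exp (t * (real (Y n b \<omega>) - m)))" for b \<omega>
    by (simp add: \<Phi>_def V_def K_def)
  have blocks: "indep_vars (\<lambda>b. PiM (K b) (\<lambda>_. count_space UNIV)) V {0..j}"
    unfolding V_def
    by (rule indep_vars_restrict[OF indep])
       (use n in \<open>auto simp: K_def past_indices_def disjoint_family_on_def\<close>)
  have factors: "indep_vars (\<lambda>_. borel) (\<lambda>b \<omega>. \<Phi> b (V b \<omega>)) {0..j}"
  proof (rule indep_vars_compose2[OF blocks])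
    fix b assume "b \<in> {0..j}"
    show "\<Phi> b \<in> borel_measurable (PiM (K b) (\<lambda>_. count_space UNIV))"
    proof (cases "b = 0")
      case False
      have "(n, b) \<in> K b" using False by (simp add: K_def)
      hence "(\<lambda>w. w (n, b)) \<in> measurable (PiM (K b) (\<lambda>_. count_space UNIV)) (count_space UNIV)"
        by (rule measurable_component_singleton)
      hence "(\<lambda>w. ennreal (exp (t * (real (w (n, b)) - m)))) \<in> borel_measurable (PiM (K b) (\<lambda>_. count_space UNIV))"
        by (rule measurable_compose) simp
      then show ?thesis using False by (simp add: \<Phi>_def[abs_def])
    qed (simp add: \<Phi>_def[abs_def] K_def)
  qed
  have "(\<integral>\<^sup>+\<omega>. (\<Prod>b\<in>{0..j}. \<Phi> b (V b \<omega>)) \<partial>M) = (\<Prod>b\<in>{0..j}. \<integral>\<^sup>+\<omega>. \<Phi> b (V b \<omega>) \<partial>M)"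
    by (rule indep_vars_nn_integral[OF _ factors]) auto
  moreover have "{0..j} = insert 0 {1..j}" by auto
  moreover have "(\<integral>\<^sup>+\<omega>. \<Phi> b (V b \<omega>) \<partial>M) = ennreal (exp (L t))" if "b \<in> {1..j}" for b
    using that n by (simp add: Vb offspring_mgf[OF t])
  ultimately show ?thesis by (simp add: V0 Vb)
qed

text \<open>The key identity: conditionally on the past, X n - m X (n-1) is a sum of X (n-1)
  independent centred offspring variables, so for any functional F of the past
  E[F exp (t (X n - m X (n-1)))] = E[F exp (L t X (n-1))].  It is proved on each level set
  {X (n-1) = j} and summed over j.\<close>
lemma generation_step:
  assumes n: "1 \<le> n" and t: "t \<in> {-c..c}"
    and F[measurable]: "F \<in> borel_measurable (history_space n)"
  shows "(\<integral>\<^sup>+\<omega>. F (history Y n \<omega>) * ennreal (exp (t * (real (gw_X Y n \<omega>) - m * real (gw_X Y (n-1) \<omega>)))) \<partial>M)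
       = (\<integral>\<^sup>+\<omega>. F (history Y n \<omega>) * ennreal (exp (L t * real (gw_X Y (n-1) \<omega>))) \<partial>M)"
proof -
  define N where "N \<omega> = gw_X Y (n-1) \<omega>" for \<omega>
  define h where "h = gw_X coordinate_offspring (n-1)"
  have Nh: "N \<omega> = h (history Y n \<omega>)" for \<omega> using gw_X_history[of "n-1" n] n by (simp add: N_def h_def)
  have [measurable]: "h \<in> measurable (history_space n) (count_space UNIV)"
    using gw_X_coordinate_measurable n by (simp add: h_def)
  have [measurable]: "N \<in> measurable M (count_space UNIV)" unfolding N_def by measurable
  have Xn: "gw_X Y n \<omega> = (\<Sum>k=1..N \<omega>. Y n k \<omega>)" for \<omega>
    using n by (cases n) (auto simp: N_def)
  define G1 where "G1 \<omega> = F (history Y n \<omega>) * ennreal (exp (t * (real (gw_X Y n \<omega>) - m * real (N \<omega>))))" for \<omega>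
  define G2 where "G2 \<omega> = F (history Y n \<omega>) * ennreal (exp (L t * real (N \<omega>)))" for \<omega>
  have G_measurable[measurable]: "G1 \<in> borel_measurable M" "G2 \<in> borel_measurable M"
    unfolding G1_def G2_def N_def by measurable
  have level: "(\<integral>\<^sup>+\<omega>. (if j = N \<omega> then G1 \<omega> else 0) \<partial>M) = (\<integral>\<^sup>+\<omega>. (if j = N \<omega> then G2 \<omega> else 0) \<partial>M)" for j
  proof -
    define Fj where "Fj w = (if h w = j then F w else 0)" for w
    have [measurable]: "Fj \<in> borel_measurable (history_space n)" unfolding Fj_def[abs_def] by measurable
    have split: "(if j = N \<omega> then G1 \<omega> else 0)
        = Fj (history Y n \<omega>) * (\<Prod>b\<in>{1..j}. ennreal (exp (t * (real (Y n b \<omega>) - m))))" for \<omega>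
    proof (cases "j = N \<omega>")
      case True
      have "t * (real (gw_X Y n \<omega>) - m * real (N \<omega>)) = (\<Sum>b\<in>{1..j}. t * (real (Y n b \<omega>) - m))"
        by (simp add: Xn True sum_subtractf sum_distrib_left algebra_simps)
      then show ?thesis using True by (simp add: G1_def Fj_def Nh exp_sum prod_ennreal)
    qed (auto simp: Fj_def Nh)
    have "(\<integral>\<^sup>+\<omega>. (if j = N \<omega> then G1 \<omega> else 0) \<partial>M) = (\<integral>\<^sup>+\<omega>. Fj (history Y n \<omega>) \<partial>M) * ennreal (exp (L t)) ^ j"
      unfolding split by (rule history_offspring_independent[OF n t]) measurable
    also have "\<dots> = (\<integral>\<^sup>+\<omega>. Fj (history Y n \<omega>) * ennreal (exp (L t * real j)) \<partial>M)"
      by (subst nn_integral_multc) (auto simp: ennreal_power exp_of_nat_mult[symmetric] mult.commute)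
    also have "\<dots> = (\<integral>\<^sup>+\<omega>. (if j = N \<omega> then G2 \<omega> else 0) \<partial>M)"
      by (rule nn_integral_cong) (simp add: G2_def Fj_def Nh)
    finally show ?thesis .
  qed
  have by_levels: "(\<integral>\<^sup>+\<omega>. G \<omega> \<partial>M) = (\<Sum>j. \<integral>\<^sup>+\<omega>. (if j = N \<omega> then G \<omega> else 0) \<partial>M)"
    if [measurable]: "G \<in> borel_measurable M" for G
  proof -
    have "G \<omega> = (\<Sum>j. if j = N \<omega> then G \<omega> else 0)" for \<omega>
      using sums_single[of "N \<omega>" "\<lambda>_. G \<omega>"] by (simp add: sums_iff)
    hence "(\<integral>\<^sup>+\<omega>. G \<omega> \<partial>M) = (\<integral>\<^sup>+\<omega>. (\<Sum>j. if j = N \<omega> then G \<omega> else 0) \<partial>M)" by simp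
    also have "\<dots> = (\<Sum>j. \<integral>\<^sup>+\<omega>. (if j = N \<omega> then G \<omega> else 0) \<partial>M)"
      by (rule nn_integral_suminf) measurable
    finally show ?thesis .
  qed
  have "(\<integral>\<^sup>+\<omega>. G1 \<omega> \<partial>M) = (\<integral>\<^sup>+\<omega>. G2 \<omega> \<partial>M)"
    unfolding by_levels[OF G_measurable(1)] by_levels[OF G_measurable(2)] level ..
  then show ?thesis by (simp add: G1_def G2_def N_def)
qed

lemma one_step_exponential_identity:
  assumes n: "1 \<le> n" and t: "t \<in> {-c..c}"
  shows "(\<integral>\<^sup>+\<omega>. ennreal (exp (t * (real (gw_X Y n \<omega>) - m * real (gw_X Y (n-1) \<omega>)) - l * real (gw_X Y (n-1) \<omega>))) \<partial>M)
       = (\<integral>\<^sup>+\<omega>. ennreal (exp (- (l - L t) * real (gw_X Y (n-1) \<omega>))) \<partial>M)"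
proof -
  define F where "F w = ennreal (exp (- l * real (gw_X coordinate_offspring (n-1) w)))" for w
  have [measurable]: "(\<lambda>w. real (gw_X coordinate_offspring (n-1) w)) \<in> borel_measurable (history_space n)"
    using real_gw_X_coordinate_measurable[of "n-1" n] n by simp
  have Fm: "F \<in> borel_measurable (history_space n)"
    unfolding F_def[abs_def] by measurable
  have FW: "F (history Y n \<omega>) = ennreal (exp (- l * real (gw_X Y (n-1) \<omega>)))" for \<omega>
    using gw_X_history[of "n-1" n Y \<omega>] n by (simp add: F_def)
  have "(\<integral>\<^sup>+\<omega>. ennreal (exp (t * (real (gw_X Y n \<omega>) - m * real (gw_X Y (n-1) \<omega>)) - l * real (gw_X Y (n-1) \<omega>))) \<partial>M)
     = (\<integral>\<^sup>+\<omega>. F (history Y n \<omega>) * ennreal (exp (t * (real (gw_X Y n \<omega>) - m * real (gw_X Y (n-1) \<omega>)))) \<partial>M)"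
    by (rule nn_integral_cong) (simp add: FW ennreal_mult[symmetric] exp_add[symmetric] algebra_simps)
  also have "\<dots> = (\<integral>\<^sup>+\<omega>. F (history Y n \<omega>) * ennreal (exp (L t * real (gw_X Y (n-1) \<omega>))) \<partial>M)"
    by (rule generation_step[OF n t Fm])
  also have "\<dots> = (\<integral>\<^sup>+\<omega>. ennreal (exp (- (l - L t) * real (gw_X Y (n-1) \<omega>))) \<partial>M)"
    by (rule nn_integral_cong) (simp add: FW ennreal_mult[symmetric] exp_add[symmetric] algebra_simps)
  finally show ?thesis .
qed

text \<open>The exponential martingale of the cumulative estimator, written for an arbitrary family
  of offspring variables Y' so that it can be evaluated both on the process and on its
  history.\<close>
definition exp_martingale :: "real \<Rightarrow> (nat \<Rightarrow> nat \<Rightarrow> 'b \<Rightarrow> nat) \<Rightarrow> nat \<Rightarrow> 'b \<Rightarrow> real" where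
  "exp_martingale t Y' r \<omega> = exp (t * (\<Sum>k=1..r. real (gw_X Y' k \<omega>) - m * real (gw_X Y' (k-1) \<omega>))
       - L t * (\<Sum>k=1..r. real (gw_X Y' (k-1) \<omega>)))"

lemma exp_martingale_history:
  "r < n \<Longrightarrow> exp_martingale t Y r \<omega> = exp_martingale t coordinate_offspring r (history Y n \<omega>)"
  unfolding exp_martingale_def
  by (intro arg_cong[where f=exp] arg_cong2[where f="(-)"] arg_cong2[where f="(*)"] refl sum.cong)
     (auto intro!: gw_X_history)

lemma exp_martingale_measurable:
  "r < n \<Longrightarrow> exp_martingale t coordinate_offspring r \<in> borel_measurable (history_space n)"
proof -
  assume rn: "r < n"
  have [measurable]: "\<And>k. k \<in> {1..r} \<Longrightarrow> (\<lambda>w. real (gw_X coordinate_offspring k w)) \<in> borel_measurable (history_space n)"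
    "\<And>k. k \<in> {1..r} \<Longrightarrow> (\<lambda>w. real (gw_X coordinate_offspring (k-1) w)) \<in> borel_measurable (history_space n)"
    using rn by (auto intro!: real_gw_X_coordinate_measurable)
  show ?thesis unfolding exp_martingale_def[abs_def] by measurable
qed

lemma exp_martingale_Suc:
  "exp_martingale t Y (Suc r) \<omega> = exp_martingale t Y r \<omega> * exp (- L t * real (gw_X Y r \<omega>))
      * exp (t * (real (gw_X Y (Suc r) \<omega>) - m * real (gw_X Y r \<omega>)))"
proof -
  have "exp_martingale t Y (Suc r) \<omega> = exp ((t * (\<Sum>k=1..r. real (gw_X Y k \<omega>) - m * real (gw_X Y (k-1) \<omega>))
     - L t * (\<Sum>k=1..r. real (gw_X Y (k-1) \<omega>))) + (- L t * real (gw_X Y r \<omega>))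
     + (t * (real (gw_X Y (Suc r) \<omega>) - m * real (gw_X Y r \<omega>))))"
    unfolding exp_martingale_def by (simp add: algebra_simps del: gw_X.simps)
  thus ?thesis unfolding exp_add exp_martingale_def .
qed

text \<open>The martingale has mean one: each step multiplies the expectation by one, by the
  generation step applied to the functional "martingale up to r times exp (-L t X r)".\<close>
lemma exp_martingale_mean_one:
  assumes t: "t \<in> {-c..c}"
  shows "(\<integral>\<^sup>+\<omega>. ennreal (exp_martingale t Y r \<omega>) \<partial>M) = 1"
proof (induction r)
  case 0
  then show ?case by (simp add: exp_martingale_def emeasure_space_1)
next
  case (Suc r)
  define F where "F w = ennreal (exp_martingale t coordinate_offspring r w
      * exp (- L t * real (gw_X coordinate_offspring r w)))" for w
  have Fm: "F \<in> borel_measurable (history_space (Suc r))"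
    unfolding F_def[abs_def]
    using real_gw_X_coordinate_measurable[of r "Suc r"] exp_martingale_measurable[of r "Suc r"] by measurable
  have FW: "F (history Y (Suc r) \<omega>) = ennreal (exp_martingale t Y r \<omega> * exp (- L t * real (gw_X Y r \<omega>)))" for \<omega>
    using gw_X_history[of r "Suc r" Y \<omega>] exp_martingale_history[of r "Suc r" t \<omega>] by (simp add: F_def)
  have "(\<integral>\<^sup>+\<omega>. ennreal (exp_martingale t Y (Suc r) \<omega>) \<partial>M)
      = (\<integral>\<^sup>+\<omega>. F (history Y (Suc r) \<omega>) * ennreal (exp (t * (real (gw_X Y (Suc r) \<omega>) - m * real (gw_X Y (Suc r - 1) \<omega>)))) \<partial>M)"
    by (rule nn_integral_cong) (simp add: FW exp_martingale_Suc ennreal_mult''[symmetric] del: gw_X.simps)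
  also have "\<dots> = (\<integral>\<^sup>+\<omega>. F (history Y (Suc r) \<omega>) * ennreal (exp (L t * real (gw_X Y (Suc r - 1) \<omega>))) \<partial>M)"
    by (rule generation_step[OF _ t Fm]) simp
  also have "\<dots> = (\<integral>\<^sup>+\<omega>. ennreal (exp_martingale t Y r \<omega>) \<partial>M)"
    by (rule nn_integral_cong)
       (simp add: FW ennreal_mult''[symmetric] mult.assoc exp_add[symmetric] del: gw_X.simps)
  finally show ?case using Suc by simp
qed


section \<open>Tail bounds in terms of the rate function\<close>

lemma rate_bdd_above: "bdd_above ((\<lambda>t. a * t - L t) ` {-c..c})"
proof (rule bdd_aboveI2)
  fix t assume t: "t \<in> {-c..c}"
  have "a * t \<le> \<bar>a\<bar> * \<bar>t\<bar>" by (simp add: abs_mult[symmetric])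
  also have "\<dots> \<le> \<bar>a\<bar> * c" using t by (intro mult_left_mono) auto
  finally show "a * t - L t \<le> \<bar>a\<bar> * c" using L_nonneg[OF t] by simp
qed

lemma zero_in_range: "0 \<in> {-c..c}"
  using c_pos by simp

lemma gw_I_nonneg: "gw_I M Y m c a \<ge> 0"
  using cSUP_upper[OF zero_in_range rate_bdd_above[of a]] by (simp add: gw_I_def L_zero)

lemma gw_J_nonneg: "gw_J M Y m c x \<ge> 0"
  using gw_I_nonneg by (simp add: gw_J_def)

text \<open>A parameter t with a t - L t \<ge> 0 has the sign of a, since L \<ge> 0.\<close>
lemma rate_sign: "t \<in> {-c..c} \<Longrightarrow> a * t - L t \<ge> 0 \<Longrightarrow> t * a \<ge> 0"
  using L_nonneg[of t] by (simp add: mult.commute)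

lemma overshoot_markov_rate:
  assumes Dm[measurable]: "D \<in> borel_measurable M" and Rm[measurable]: "R \<in> borel_measurable M"
    and R0: "\<And>\<omega>. R \<omega> \<ge> 0" and a: "a \<noteq> 0"
    and H: "\<And>t l. t \<in> {-c..c} \<Longrightarrow> (\<integral>\<^sup>+\<omega>. ennreal (exp (t * D \<omega> - l * R \<omega>)) \<partial>M)
              = (\<integral>\<^sup>+\<omega>. ennreal (exp (- (l - L t) * R \<omega>)) \<partial>M)"
  shows "measure M (overshoot_event M D R a) \<le> integral\<^sup>L M (\<lambda>\<omega>. exp (- gw_I M Y m c a * R \<omega>))"
  unfolding gw_I_def
proof (rule le_at_Sup_by_approximation[where f="\<lambda>t. a * t - L t", OF zero_in_range _ rate_bdd_above])
  fix t assume t: "t \<in> {-c..c}" and ft: "a * t - L t \<ge> 0"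
  have "(\<integral>\<^sup>+\<omega>. ennreal (exp (t * D \<omega> - t * a * R \<omega>)) \<partial>M)
      = (\<integral>\<^sup>+\<omega>. ennreal (exp (- (a * t - L t) * R \<omega>)) \<partial>M)"
    using H[OF t, of "t * a"] by (simp add: algebra_simps)
  then show "measure M (overshoot_event M D R a) \<le> integral\<^sup>L M (\<lambda>\<omega>. exp (- (a * t - L t) * R \<omega>))"
    by (rule overshoot_markov[OF Dm Rm R0 a rate_sign[OF t ft] ft])
next
  fix w :: "nat \<Rightarrow> real" assume "\<And>k. w k \<ge> 0" "w \<longlonglongrightarrow> (SUP t\<in>{-c..c}. a * t - L t)"
  then show "(\<lambda>k. integral\<^sup>L M (\<lambda>\<omega>. exp (- w k * R \<omega>)))
      \<longlonglongrightarrow> integral\<^sup>L M (\<lambda>\<omega>. exp (- (SUP t\<in>{-c..c}. a * t - L t) * R \<omega>))"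
    by (rule integral_exp_neg_tendsto[OF Rm R0])
qed (simp add: L_zero)

lemma overshoot_young_rate:
  assumes Dm[measurable]: "D \<in> borel_measurable M" and Rm[measurable]: "R \<in> borel_measurable M"
    and R0: "\<And>\<omega>. R \<omega> \<ge> 0" and a: "a \<noteq> 0" and p: "p > 1"
    and H: "\<And>t. t \<in> {-c..c} \<Longrightarrow> (\<integral>\<^sup>+\<omega>. ennreal (exp (t * D \<omega> - L t * R \<omega>)) \<partial>M) \<le> 1"
  shows "measure M (overshoot_event M D R a)
    \<le> (integral\<^sup>L M (\<lambda>\<omega>. exp (- ((p - 1) * gw_I M Y m c a) * R \<omega>))) powr (1 / p)"
  unfolding gw_I_def
proof (rule le_at_Sup_by_approximation[where f="\<lambda>t. a * t - L t", OF zero_in_range _ rate_bdd_above])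
  fix t assume t: "t \<in> {-c..c}" and ft: "a * t - L t \<ge> 0"
  show "measure M (overshoot_event M D R a)
      \<le> (integral\<^sup>L M (\<lambda>\<omega>. exp (- ((p - 1) * (a * t - L t)) * R \<omega>))) powr (1 / p)"
    by (rule overshoot_young[OF Dm Rm R0 a rate_sign[OF t ft] ft p refl H[OF t]])
next
  fix w :: "nat \<Rightarrow> real" assume w: "\<And>k. w k \<ge> 0" "w \<longlonglongrightarrow> (SUP t\<in>{-c..c}. a * t - L t)"
  have "(\<lambda>k. integral\<^sup>L M (\<lambda>\<omega>. exp (- ((p - 1) * w k) * R \<omega>)))
      \<longlonglongrightarrow> integral\<^sup>L M (\<lambda>\<omega>. exp (- ((p - 1) * (SUP t\<in>{-c..c}. a * t - L t)) * R \<omega>))"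
    using w p by (intro integral_exp_neg_tendsto[OF _ R0] tendsto_intros) auto
  moreover have "integral\<^sup>L M (\<lambda>\<omega>. exp (- ((p - 1) * (SUP t\<in>{-c..c}. a * t - L t)) * R \<omega>)) \<noteq> 0"
    using integral_exp_neg_pos[OF Rm R0, of "(p - 1) * gw_I M Y m c a"] gw_I_nonneg[of a] p
    by (simp add: gw_I_def)
  ultimately show "(\<lambda>k. (integral\<^sup>L M (\<lambda>\<omega>. exp (- ((p - 1) * w k) * R \<omega>))) powr (1 / p))
      \<longlonglongrightarrow> (integral\<^sup>L M (\<lambda>\<omega>. exp (- ((p - 1) * (SUP t\<in>{-c..c}. a * t - L t)) * R \<omega>))) powr (1 / p)"
    by (intro tendsto_powr tendsto_const)
qed (simp add: L_zero)

lemma ratio_deviation_markov: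
  assumes [measurable]: "N \<in> borel_measurable M" "R \<in> borel_measurable M"
    and R0: "\<And>\<omega>. R \<omega> \<ge> 0" and Rpos: "AE \<omega> in M. R \<omega> > 0" and x: "x > 0"
    and H: "\<And>t l. t \<in> {-c..c} \<Longrightarrow> (\<integral>\<^sup>+\<omega>. ennreal (exp (t * (N \<omega> - m * R \<omega>) - l * R \<omega>)) \<partial>M)
              = (\<integral>\<^sup>+\<omega>. ennreal (exp (- (l - L t) * R \<omega>)) \<partial>M)"
  shows "measure M {\<omega> \<in> space M. \<bar>N \<omega> / R \<omega> - m\<bar> \<ge> x}
    \<le> 2 * integral\<^sup>L M (\<lambda>\<omega>. exp (- gw_J M Y m c x * R \<omega>))"
proof -
  have tail: "measure M (overshoot_event M (\<lambda>\<omega>. N \<omega> - m * R \<omega>) R a)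
      \<le> integral\<^sup>L M (\<lambda>\<omega>. exp (- gw_J M Y m c x * R \<omega>))" if "a \<in> {x, - x}" for a
  proof -
    have "gw_J M Y m c x \<le> gw_I M Y m c a" using that by (auto simp: gw_J_def)
    with that x show ?thesis
      by (intro order.trans[OF overshoot_markov_rate[OF _ _ R0 _ H]]
            integral_exp_neg_antimono[OF _ R0 gw_J_nonneg]) auto
  qed
  show ?thesis
    using ratio_deviation_le[OF _ _ Rpos x, of N m] tail[of x] tail[of "- x"] by simp
qed

lemma ratio_deviation_young:
  assumes [measurable]: "N \<in> borel_measurable M" "R \<in> borel_measurable M"
    and R0: "\<And>\<omega>. R \<omega> \<ge> 0" and Rpos: "AE \<omega> in M. R \<omega> > 0" and x: "x > 0" and p: "p > 1"
    and H: "\<And>t. t \<in> {-c..c} \<Longrightarrow> (\<integral>\<^sup>+\<omega>. ennreal (exp (t * (N \<omega> - m * R \<omega>) - L t * R \<omega>)) \<partial>M) \<le> 1"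
  shows "measure M {\<omega> \<in> space M. \<bar>N \<omega> / R \<omega> - m\<bar> \<ge> x}
    \<le> 2 * (integral\<^sup>L M (\<lambda>\<omega>. exp (- (p - 1) * gw_J M Y m c x * R \<omega>))) powr (1 / p)"
proof -
  have pJ: "0 \<le> (p - 1) * gw_J M Y m c x" using p gw_J_nonneg by simp
  have tail: "measure M (overshoot_event M (\<lambda>\<omega>. N \<omega> - m * R \<omega>) R a)
      \<le> (integral\<^sup>L M (\<lambda>\<omega>. exp (- ((p - 1) * gw_J M Y m c x) * R \<omega>))) powr (1 / p)" if "a \<in> {x, - x}" for a
  proof -
    have "gw_J M Y m c x \<le> gw_I M Y m c a" using that by (auto simp: gw_J_def)
    with that x p show ?thesis
      by (intro order.trans[OF overshoot_young_rate[OF _ _ R0 _ p H]] powr_mono2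
            integral_exp_neg_antimono[OF _ R0 pJ] integral_nonneg_AE mult_left_mono) auto
  qed
  have "(\<lambda>\<omega>. exp (- ((p - 1) * gw_J M Y m c x) * R \<omega>)) = (\<lambda>\<omega>. exp (- (p - 1) * gw_J M Y m c x * R \<omega>))"
    by (rule ext) (simp only: minus_mult_left mult.assoc)
  then show ?thesis
    using ratio_deviation_le[OF _ _ Rpos x, of N m] tail[of x] tail[of "- x"] by simp
qed

end


lemma le_twice_INF:
  fixes g :: "real \<Rightarrow> real"
  assumes "\<And>p. p > 1 \<Longrightarrow> P \<le> 2 * g p"
  shows "P \<le> 2 * (INF p\<in>{1<..}. g p)"
proof -
  have "P / 2 \<le> (INF p\<in>{1<..}. g p)"
    by (rule cINF_greatest) (use assms in \<open>force+\<close>)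
  thus ?thesis by simp
qed

theorem corollary5p3:
  fixes M :: "'a measure" and Y :: "nat \<Rightarrow> nat \<Rightarrow> 'a \<Rightarrow> nat"
    and m c x :: real and n :: nat
  assumes "prob_space M"
    and indep: "prob_space.indep_vars M (\<lambda>_. count_space UNIV) (\<lambda>(i, k). Y i k)
                  {(i, k). 1 \<le> i \<and> 1 \<le> k}"
    and ident: "\<And>i k. 1 \<le> i \<Longrightarrow> 1 \<le> k \<Longrightarrow>
                  distr M (count_space UNIV) (Y i k) = distr M (count_space UNIV) (Y 1 1)"
    and mean_int: "integrable M (\<lambda>\<omega>. real (Y 1 1 \<omega>))"
    and m_def: "m = integral\<^sup>L M (\<lambda>\<omega>. real (Y 1 1 \<omega>))"
    and m_gt: "m > 1"
    and var_fin: "integrable M (\<lambda>\<omega>. (real (Y 1 1 \<omega>))\<^sup>2)"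
    and nonext: "AE \<omega> in M. \<forall>j. gw_X Y j \<omega> \<noteq> 0"
    and c_pos: "c > 0"
    and mgf_fin: "\<And>t. t \<in> {-c..c} \<Longrightarrow> integrable M (\<lambda>\<omega>. exp (t * (real (Y 1 1 \<omega>) - m)))"
    and n_pos: "n \<ge> 1"
    and x_pos: "x > 0"
  shows
    "measure M {\<omega> \<in> space M. \<bar>real (gw_X Y n \<omega>) / real (gw_X Y (n - 1) \<omega>) - m\<bar> \<ge> x}
       \<le> 2 * integral\<^sup>L M (\<lambda>\<omega>. exp (- gw_J M Y m c x * real (gw_X Y (n - 1) \<omega>)))
     \<and> measure M {\<omega> \<in> space M. \<bar>real (gw_X Y n \<omega>) / real (gw_X Y (n - 1) \<omega>) - m\<bar> \<ge> x}
       \<le> 2 * (INF p\<in>{1<..}. (integral\<^sup>L M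
              (\<lambda>\<omega>. exp (- (p - 1) * gw_J M Y m c x * real (gw_X Y (n - 1) \<omega>)))) powr (1 / p))
     \<and> measure M {\<omega> \<in> space M.
          \<bar>real (\<Sum>k = 1..n. gw_X Y k \<omega>) / real (\<Sum>k = 1..n. gw_X Y (k - 1) \<omega>) - m\<bar> \<ge> x}
       \<le> 2 * (INF p\<in>{1<..}. (integral\<^sup>L M
              (\<lambda>\<omega>. exp (- (p - 1) * gw_J M Y m c x * real (\<Sum>k = 0..n - 1. gw_X Y k \<omega>)))) powr (1 / p))"
proof -
  interpret galton_watson M Y m c
    by (intro galton_watson.intro galton_watson_axioms.intro assms)
  define N1 where "N1 \<omega> = real (gw_X Y n \<omega>)" for \<omega>
  define R1 where "R1 \<omega> = real (gw_X Y (n - 1) \<omega>)" for \<omega>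
  define N2 where "N2 \<omega> = real (\<Sum>k = 1..n. gw_X Y k \<omega>)" for \<omega>
  define R2 where "R2 \<omega> = real (\<Sum>k = 1..n. gw_X Y (k - 1) \<omega>)" for \<omega>
  have [measurable]: "N1 \<in> borel_measurable M" "R1 \<in> borel_measurable M"
    "N2 \<in> borel_measurable M" "R2 \<in> borel_measurable M"
    unfolding N1_def R1_def N2_def R2_def by measurable
  have cramer: "(\<integral>\<^sup>+\<omega>. ennreal (exp (t * (N1 \<omega> - m * R1 \<omega>) - l * R1 \<omega>)) \<partial>M)
      = (\<integral>\<^sup>+\<omega>. ennreal (exp (- (l - L t) * R1 \<omega>)) \<partial>M)" if "t \<in> {-c..c}" for t l
    using one_step_exponential_identity[OF n_pos that] by (simp add: N1_def R1_def)
  have R1_pos: "AE \<omega> in M. R1 \<omega> > 0"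
    using nonext by eventually_elim (simp add: R1_def)
  txt \<open>Cumulative estimator: the exponential martingale has mean one, and R2 \<ge> X 0 = 1.\<close>
  have martingale: "(\<integral>\<^sup>+\<omega>. ennreal (exp (t * (N2 \<omega> - m * R2 \<omega>) - L t * R2 \<omega>)) \<partial>M) \<le> 1"
    if "t \<in> {-c..c}" for t
    using exp_martingale_mean_one[OF that, of n]
    by (simp add: exp_martingale_def N2_def R2_def sum_subtractf sum_distrib_left)
  have R2_pos: "R2 \<omega> > 0" for \<omega>
    using member_le_sum[of 1 "{1..n}" "\<lambda>k. real (gw_X Y (k - 1) \<omega>)"] n_pos by (simp add: R2_def)
  have R2_shift: "R2 \<omega> = real (\<Sum>k = 0..n - 1. gw_X Y k \<omega>)" for \<omega>
  proof -
    obtain n' where n': "n = Suc n'" using n_pos by (cases n) auto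
    show ?thesis unfolding R2_def n' One_nat_def sum.atLeast_Suc_atMost_Suc_shift by (simp del: gw_X.simps)
  qed
  have "measure M {\<omega> \<in> space M. \<bar>N1 \<omega> / R1 \<omega> - m\<bar> \<ge> x}
      \<le> 2 * integral\<^sup>L M (\<lambda>\<omega>. exp (- gw_J M Y m c x * R1 \<omega>))"
    by (rule ratio_deviation_markov[OF _ _ _ R1_pos x_pos cramer]) (auto simp: R1_def)
  moreover have "measure M {\<omega> \<in> space M. \<bar>N1 \<omega> / R1 \<omega> - m\<bar> \<ge> x}
      \<le> 2 * (INF p\<in>{1<..}. (integral\<^sup>L M (\<lambda>\<omega>. exp (- (p - 1) * gw_J M Y m c x * R1 \<omega>))) powr (1 / p))"
    using cramer[of _ "L _"] emeasure_space_1
    by (intro le_twice_INF ratio_deviation_young[OF _ _ _ R1_pos x_pos]) (auto simp: R1_def)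
  moreover have "measure M {\<omega> \<in> space M. \<bar>N2 \<omega> / R2 \<omega> - m\<bar> \<ge> x}
      \<le> 2 * (INF p\<in>{1<..}. (integral\<^sup>L M (\<lambda>\<omega>. exp (- (p - 1) * gw_J M Y m c x * R2 \<omega>))) powr (1 / p))"
    using R2_pos martingale
    by (intro le_twice_INF ratio_deviation_young[OF _ _ _ _ x_pos] AE_I2) (auto intro: less_imp_le)
  ultimately show ?thesis
    unfolding N1_def[symmetric] R1_def[symmetric] N2_def[symmetric] R2_def[symmetric] R2_shift[symmetric]
    by blast
qed

end
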